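(* Let $F$ be a face of the derived arrangement $\delta\mathcal{A}_{\bm o}$ and let $\bm a,\bm b\in\operatorname{relint}(F)$. Then for every partition $I,J,K$ of $[m]$, the polyhedra $P(\bm a,I,J,K)$ and $P(\bm b,I,J,K)$ are either both empty or both nonempty, and in the latter case they are normally equivalent and combinatorially equivalent.
   Context: Fix nonzero vectors $\bm u_1,\dots,\bm u_m\in\mathbb{R}^n$ (repetitions and parallel vectors allowed) and let $U$ be the $m\times n$ matrix with rows $\bm u_1,\dots,\bm u_m$. For $I\subseteq[m]=\{1,\dots,m\}$, $U_I$ is the submatrix of rows indexed by $I$, and for $\bm a\in\mathbb{R}^m$, $\bm a_I$ is the subvector with indices in $I$. For $\bm a\in\mathbb{R}^m$ and a partition $I,J,K$ of $[m]$ (parts may be empty), $P(\bm a,I,J,K)=\{\bm x\in\mathbb{R}^n: U_I\bm x=\bm a_I,\ U_J\bm x\le \bm a_J,\ U_K\bm x\ge\bm a_K\}$ (componentwise inequalities). Derived arrangement: a circuit is a subset $C\subseteq[m]$ such that the indexed family $\{\bm u_i: i\in C\}$ is a minimal linearly dependent family. For each circuit $C$ fix a circuit vector $\bm c^C=(c_1,\dots,c_m)\in\mathbb{R}^m$ with $\sum_i c_i\bm u_i=\bm 0$ and $c_i\ne0\iff i\in C$ (unique up to a nonzero scalar). The derived arrangement $\delta\mathcal{A}_{\bm o}$ is the arrangement in $\mathbb{R}^m$ of the linear hyperplanes $\{\bm y\in\mathbb{R}^m:\langle \bm c^C,\bm y\rangle=0\}$, $C$ ranging over all circuits. Its open faces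 are the nonempty sets of the form $\{\bm y: \operatorname{sign}\langle\bm c^C,\bm y\rangle=\epsilon_C\text{ for all circuits }C\}$ for fixed $\epsilon_C\in\{+,0,-\}$; its faces are the closures of the open faces, and $\operatorname{relint}(F)$ is the open face whose closure is $F$. For a nonempty convex polyhedron $P\subseteq\mathbb{R}^n$, its support function is $h_P(\bm u)=\sup\{\langle\bm u,\bm x\rangle:\bm x\in P\}$; for $\bm x\in P$ the normal cone is $N_P(\bm x)=\{\bm u\in\mathbb{R}^n:\langle\bm u,\bm x\rangle=h_P(\bm u)\}$; for a nonempty face $G$ of $P$, $N_P(G)=N_P(\bm x)$ for any $\bm x\in\operatorname{relint}(G)$; the normal fan is $\mathcal{N}(P)=\{N_P(G): G \text{ a nonempty face of }P\}$. Two convex polyhedra are normally equivalent if they have the same normal fan, and combinatorially equivalent if their face posets (all faces including $\emptyset$ and the polyhedron itself, ordered by inclusion) are isomorphic. *)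

theory Defs
  imports "HOL-Analysis.Analysis" "HOL-Library.Extended_Real"
begin

text \<open>Row vectors u i in R^n (index type 'n), indexed by the finite type 'm playing the role of [m].
  Vectors in R^m are elements of real^'m.\<close>

definition lin_dep_family :: "('m::finite \<Rightarrow> real^'n::finite) \<Rightarrow> 'm set \<Rightarrow> bool" where
  "lin_dep_family u C \<longleftrightarrow>
     (\<exists>c :: 'm \<Rightarrow> real. (\<forall>i. i \<notin> C \<longrightarrow> c i = 0) \<and> (\<exists>i\<in>C. c i \<noteq> 0)
        \<and> (\<Sum>i\<in>C. c i *\<^sub>R u i) = 0)"

definition is_circuit :: "('m::finite \<Rightarrow> real^'n::finite) \<Rightarrow> 'm set \<Rightarrow> bool" where
  "is_circuit u C \<longleftrightarrow> lin_dep_family u C \<and> (\<forall>D. D \<subset> C \<longrightarrow> \<not> lin_dep_family u D)"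

definition is_circuit_vector :: "('m::finite \<Rightarrow> real^'n::finite) \<Rightarrow> 'm set \<Rightarrow> real^'m \<Rightarrow> bool" where
  "is_circuit_vector u C c \<longleftrightarrow>
     (\<Sum>i\<in>UNIV. (c $ i) *\<^sub>R u i) = 0 \<and> (\<forall>i. c $ i \<noteq> 0 \<longleftrightarrow> i \<in> C)"

definition derived_open_faces ::
    "('m::finite \<Rightarrow> real^'n::finite) \<Rightarrow> ('m set \<Rightarrow> real^'m) \<Rightarrow> (real^'m) set set" where
  "derived_open_faces u cv =
     {G. G \<noteq> {} \<and> (\<exists>\<epsilon> :: 'm set \<Rightarrow> real. (\<forall>C. \<epsilon> C \<in> {-1, 0, 1}) \<and>
            G = {y. \<forall>C. is_circuit u C \<longrightarrow> sgn (cv C \<bullet> y) = \<epsilon> C})}"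

definition derived_faces ::
    "('m::finite \<Rightarrow> real^'n::finite) \<Rightarrow> ('m set \<Rightarrow> real^'m) \<Rightarrow> (real^'m) set set" where
  "derived_faces u cv = closure ` derived_open_faces u cv"

definition polyP ::
    "('m::finite \<Rightarrow> real^'n::finite) \<Rightarrow> real^'m \<Rightarrow> 'm set \<Rightarrow> 'm set \<Rightarrow> 'm set \<Rightarrow> (real^'n) set" where
  "polyP u a I J K = {x. (\<forall>i\<in>I. u i \<bullet> x = a $ i) \<and> (\<forall>i\<in>J. u i \<bullet> x \<le> a $ i)
                          \<and> (\<forall>i\<in>K. u i \<bullet> x \<ge> a $ i)}"

definition support_fun :: "'a::real_inner set \<Rightarrow> 'a \<Rightarrow> ereal" where
  "support_fun P v = (SUP x\<in>P. ereal (v \<bullet> x))"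

definition normal_cone :: "'a::real_inner set \<Rightarrow> 'a \<Rightarrow> 'a set" where
  "normal_cone P x = {v. ereal (v \<bullet> x) = support_fun P v}"

definition normal_fan :: "'a::euclidean_space set \<Rightarrow> 'a set set" where
  "normal_fan P = {normal_cone P x | x. \<exists>G. G face_of P \<and> G \<noteq> {} \<and> x \<in> rel_interior G}"

definition normally_equivalent :: "'a::euclidean_space set \<Rightarrow> 'a set \<Rightarrow> bool" where
  "normally_equivalent P Q \<longleftrightarrow> normal_fan P = normal_fan Q"

definition comb_equivalent :: "'a::euclidean_space set \<Rightarrow> 'b::euclidean_space set \<Rightarrow> bool" where
  "comb_equivalent P Q \<longleftrightarrow>
     (\<exists>f. bij_betw f {F. F face_of P} {G. G face_of Q} \<and>
          (\<forall>F1 F2. F1 face_of P \<longrightarrow> F2 face_of P \<longrightarrow> (F1 \<subseteq> F2 \<longleftrightarrow> f F1 \<subseteq> f F2)))"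

end

theory Submission
  imports Defs
begin

text \<open>For a fixed partition, the polyhedron \<open>P(a, I, J, K)\<close>, its faces and its normal cones are
  determined by the set of sign vectors \<open>sgn (u\<^sub>i \<bullet> x - a\<^sub>i)\<close> realized by points \<open>x\<close>: a point lies in
  \<open>P\<close> iff its sign vector is admissible, the faces are the sets of points of \<open>P\<close> at which prescribed
  constraints are tight, and the normal cone at \<open>x\<close> depends only on the constraints tight at \<open>x\<close>.
  So it suffices that \<open>a\<close> and \<open>b\<close> realize the same sign vectors.

  By Motzkin's alternative, \<open>s\<close> is not realized at \<open>b\<close> iff some linear dependence \<open>y\<close> of the \<open>u\<^sub>i\<close>
  with \<open>s\<^sub>i y\<^sub>i \<ge> 0\<close> has \<open>y \<bullet> b > 0\<close>, or \<open>y \<bullet> b = 0\<close> and \<open>y\<close> is nonzero somewhere on the support of \<open>s\<close>.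
  Conformal decomposition reduces such a certificate to a multiple of a circuit vector, and circuit
  vectors have the same sign on \<open>a\<close> and \<open>b\<close> because both lie in one open face of the derived
  arrangement.\<close>

section \<open>Dependencies, circuits and conformal decomposition\<close>

definition dependencies :: "('m::finite \<Rightarrow> real^'n::finite) \<Rightarrow> (real^'m) set" where
  "dependencies u = {y. (\<Sum>i\<in>UNIV. (y $ i) *\<^sub>R u i) = 0}"

definition vsupp :: "real^'m::finite \<Rightarrow> 'm set" where
  "vsupp y = {i. y $ i \<noteq> 0}"

definition conformal :: "real^'m::finite \<Rightarrow> real^'m \<Rightarrow> bool" where
  "conformal p y \<longleftrightarrow> (\<forall>i. p $ i = 0 \<or> 0 < p $ i * y $ i)"

lemma subspace_dependencies: "subspace (dependencies u)"
  unfolding subspace_def dependencies_def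
  by (simp add: scaleR_add_left sum.distrib flip: scaleR_scaleR scaleR_sum_right)

lemma lin_dep_family_if_dependency:
  assumes "y \<in> dependencies u" "y \<noteq> 0" "vsupp y \<subseteq> D"
  shows "lin_dep_family u D"
proof -
  have "(\<Sum>i\<in>D. (y $ i) *\<^sub>R u i) = (\<Sum>i\<in>UNIV. (y $ i) *\<^sub>R u i)"
    by (rule sum.mono_neutral_left) (use assms(3) in \<open>auto simp: vsupp_def\<close>)
  moreover obtain i where "y $ i \<noteq> 0" using assms(2) by (metis vec_eq_iff zero_index)
  ultimately show ?thesis unfolding lin_dep_family_def using assms
    by (intro exI[of _ "\<lambda>i. y $ i"]) (auto simp: vsupp_def dependencies_def)
qed

lemma circuit_nonempty: "is_circuit u C \<Longrightarrow> C \<noteq> {}"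
  by (auto simp: is_circuit_def lin_dep_family_def)

lemma circuit_vector_dependency:
  "is_circuit_vector u C c \<Longrightarrow> c \<in> dependencies u"
  by (simp add: is_circuit_vector_def dependencies_def)

lemma vsupp_circuit_vector: "is_circuit_vector u C c \<Longrightarrow> vsupp c = C"
  by (auto simp: is_circuit_vector_def vsupp_def)

lemma circuit_subset_vsupp:
  assumes "y \<in> dependencies u" "y \<noteq> 0"
  obtains C where "is_circuit u C" "C \<subseteq> vsupp y"
proof -
  let ?P = "\<lambda>D. D \<subseteq> vsupp y \<and> lin_dep_family u D"
  have "?P (vsupp y)" using lin_dep_family_if_dependency[OF assms order_refl] by simp
  then obtain D where D: "?P D" and min: "\<And>D'. ?P D' \<Longrightarrow> card D \<le> card D'"
    using ex_has_least_nat[of ?P "vsupp y" card] by blast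
  have "is_circuit u D"
    unfolding is_circuit_def
  proof (intro conjI allI impI)
    show "lin_dep_family u D" using D by simp
    fix D' assume "D' \<subset> D"
    then show "\<not> lin_dep_family u D'"
      using min[of D'] D psubset_card_mono[of D D'] by (meson finite order.trans leD psubset_imp_subset)
  qed
  then show ?thesis using that D by blast
qed

lemma dependency_on_circuit:
  assumes circ: "is_circuit u C" and c: "is_circuit_vector u C c"
    and y: "y \<in> dependencies u" "vsupp y \<subseteq> C"
  obtains t where "y = t *\<^sub>R c"
proof -
  obtain k where k: "k \<in> C" using circuit_nonempty[OF circ] by blast
  have ck: "c $ k \<noteq> 0" using vsupp_circuit_vector[OF c] k by (auto simp: vsupp_def)
  define v where "v = y - (y $ k / c $ k) *\<^sub>R c"
  have "v = 0"
  proof (rule ccontr)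
    assume "v \<noteq> 0"
    have "v \<in> dependencies u"
      unfolding v_def by (intro subspace_diff subspace_scale subspace_dependencies y
          circuit_vector_dependency[OF c])
    moreover have "vsupp v \<subseteq> C" "k \<notin> vsupp v"
      using y(2) vsupp_circuit_vector[OF c] ck by (auto simp: v_def vsupp_def)
    ultimately show False
      using lin_dep_family_if_dependency[OF _ \<open>v \<noteq> 0\<close> order_refl] circ k
      by (auto simp: is_circuit_def)
  qed
  then show ?thesis using that[of "y $ k / c $ k"] by (simp add: v_def)
qed

lemma conformalI:
  assumes "\<And>i. 0 \<le> p $ i * y $ i" "\<And>i. y $ i = 0 \<Longrightarrow> p $ i = 0"
  shows "conformal p y"
  using assms unfolding conformal_def by (metis less_eq_real_def mult_eq_0_iff)

lemma mult_diff_nonneg_if_abs_le: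
  fixes r s :: real
  assumes "\<bar>s\<bar> \<le> \<bar>r\<bar>"
  shows "0 \<le> r * (r - s)"
proof -
  have "r * s \<le> \<bar>r\<bar> * \<bar>s\<bar>" by (metis abs_ge_self abs_mult)
  also have "\<dots> \<le> \<bar>r\<bar> * \<bar>r\<bar>" by (rule mult_left_mono[OF assms abs_ge_zero])
  finally show ?thesis by (simp add: algebra_simps)
qed

text \<open>The hypothesis says that \<open>t\<close> does not overshoot any of the ratios \<open>y\<^sub>i / c\<^sub>i\<close>.\<close>

lemma conformal_diff_scaleR:
  assumes C: "vsupp c \<subseteq> vsupp y"
    and t: "\<And>i. i \<in> vsupp c \<Longrightarrow> 0 \<le> (y $ i / c $ i) * (y $ i / c $ i - t)"
  shows "conformal (y - t *\<^sub>R c) y"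
proof (rule conformalI)
  fix i
  show "0 \<le> (y - t *\<^sub>R c) $ i * y $ i"
  proof (cases "i \<in> vsupp c")
    case True
    define \<rho> where "\<rho> = y $ i / c $ i"
    have "y $ i = \<rho> * c $ i" using True by (simp add: \<rho>_def vsupp_def)
    then have "(y - t *\<^sub>R c) $ i * y $ i = (c $ i * c $ i) * (\<rho> * (\<rho> - t))"
      by (simp add: algebra_simps)
    moreover have "0 \<le> \<rho> * (\<rho> - t)" using t[OF True] by (simp add: \<rho>_def)
    ultimately show ?thesis by (metis mult_nonneg_nonneg zero_le_square)
  qed (simp add: vsupp_def)
next
  fix i assume "y $ i = 0"
  then show "(y - t *\<^sub>R c) $ i = 0" using C by (auto simp: vsupp_def)
qed

lemma vsupp_diff_ratio:
  assumes "vsupp c \<subseteq> vsupp y" "k \<in> vsupp c"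
  shows "vsupp (y - (y $ k / c $ k) *\<^sub>R c) \<subset> vsupp y"
proof -
  have "vsupp (y - (y $ k / c $ k) *\<^sub>R c) \<subseteq> vsupp y" using assms(1) by (auto simp: vsupp_def)
  moreover have "k \<notin> vsupp (y - (y $ k / c $ k) *\<^sub>R c)" using assms(2) by (simp add: vsupp_def)
  ultimately show ?thesis using assms by blast
qed

lemma conformal_scaleR:
  assumes C: "vsupp c \<subseteq> vsupp y" and t: "\<And>i. i \<in> vsupp c \<Longrightarrow> 0 < (y $ i / c $ i) * t"
  shows "conformal (t *\<^sub>R c) y"
proof (rule conformalI)
  fix i
  show "0 \<le> (t *\<^sub>R c) $ i * y $ i"
  proof (cases "i \<in> vsupp c")
    case True
    then have "(t *\<^sub>R c) $ i * y $ i = (c $ i * c $ i) * ((y $ i / c $ i) * t)"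
      by (simp add: vsupp_def field_simps)
    then show ?thesis using t[OF True] by (metis less_imp_le mult_nonneg_nonneg zero_le_square)
  qed (simp add: vsupp_def)
qed (use C in \<open>auto simp: vsupp_def\<close>)

lemma scaleR_shift_combination:
  fixes y c :: "'a::real_vector" and s t :: real
  assumes "s * t < 0"
  shows "y = (t / (t - s)) *\<^sub>R (y - s *\<^sub>R c) + (- s / (t - s)) *\<^sub>R (y - t *\<^sub>R c)"
    and "0 < t / (t - s)" "0 < - s / (t - s)"
proof -
  define \<alpha> \<beta> where "\<alpha> = t / (t - s)" and "\<beta> = - s / (t - s)"
  have "t - s \<noteq> 0" using assms by auto
  have "\<alpha> + \<beta> = (t + - s) / (t - s)" by (simp only: \<alpha>_def \<beta>_def add_divide_distrib)
  then have "\<alpha> + \<beta> = 1" using \<open>t - s \<noteq> 0\<close> by simp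
  moreover have "\<alpha> * s + \<beta> * t = 0" using \<open>t - s \<noteq> 0\<close> by (simp add: \<alpha>_def \<beta>_def field_simps)
  moreover have "\<alpha> *\<^sub>R (y - s *\<^sub>R c) + \<beta> *\<^sub>R (y - t *\<^sub>R c) = (\<alpha> + \<beta>) *\<^sub>R y - (\<alpha> * s + \<beta> * t) *\<^sub>R c"
    by (simp add: algebra_simps)
  ultimately show "y = \<alpha> *\<^sub>R (y - s *\<^sub>R c) + \<beta> *\<^sub>R (y - t *\<^sub>R c)" by simp
  show "0 < \<alpha>" "0 < \<beta>" using assms
    by (auto simp: \<alpha>_def \<beta>_def zero_less_divide_iff divide_less_0_iff mult_less_0_iff)
qed

text \<open>The summands are \<open>y - t c\<close> for the ratios \<open>t = y\<^sub>i / c\<^sub>i\<close> of least absolute value of either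
  sign; if all ratios have the same sign, the second summand is \<open>t c\<close> itself.\<close>

lemma conformal_decomposition:
  assumes ne: "vsupp c \<noteq> {}" and sub: "vsupp c \<subset> vsupp y"
  obtains p q and \<alpha> \<beta> :: real where "0 < \<alpha>" "0 < \<beta>" "y = \<alpha> *\<^sub>R p + \<beta> *\<^sub>R q"
    "conformal p y" "conformal q y" "vsupp p \<subset> vsupp y" "vsupp q \<subset> vsupp y"
    "p \<in> span {y, c}" "q \<in> span {y, c}"
proof -
  define C where "C = vsupp c"
  define r where "r j = y $ j / c $ j" for j
  have rnz: "r j \<noteq> 0" if "j \<in> C" for j using that sub by (auto simp: r_def C_def vsupp_def)
  have span: "y - t *\<^sub>R c \<in> span {y, c}" "t *\<^sub>R c \<in> span {y, c}" for t
    by (simp_all add: span_base span_diff span_scale)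
  have shift: "conformal (y - r k *\<^sub>R c) y \<and> vsupp (y - r k *\<^sub>R c) \<subset> vsupp y"
    if "k \<in> C" "\<And>j. j \<in> C \<Longrightarrow> 0 \<le> r j * (r j - r k)" for k
    using conformal_diff_scaleR[of c y "r k"] vsupp_diff_ratio[of c y k] sub that
    by (auto simp: C_def r_def)
  obtain k where k: "k \<in> C" and kmin: "\<And>j. j \<in> C \<Longrightarrow> \<bar>r k\<bar> \<le> \<bar>r j\<bar>"
    using ex_is_arg_min_if_finite[of C "\<lambda>j. \<bar>r j\<bar>"] ne
    by (auto simp: C_def is_arg_min_def not_less)
  have p: "conformal (y - r k *\<^sub>R c) y" "vsupp (y - r k *\<^sub>R c) \<subset> vsupp y"
    using shift[OF k] mult_diff_nonneg_if_abs_le[OF kmin] by auto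
  show ?thesis
  proof (cases "\<forall>j\<in>C. 0 < r j * r k")
    case True
    then have "conformal (r k *\<^sub>R c) y"
      using sub by (intro conformal_scaleR) (auto simp: C_def r_def)
    moreover have "vsupp (r k *\<^sub>R c) \<subset> vsupp y"
      using sub rnz[OF k] by (auto simp: C_def vsupp_def)
    moreover have "y = 1 *\<^sub>R (y - r k *\<^sub>R c) + 1 *\<^sub>R (r k *\<^sub>R c)" by simp
    ultimately show ?thesis using that[of 1 1 "y - r k *\<^sub>R c" "r k *\<^sub>R c"] p span by simp
  next
    case False
    define L where "L = {j\<in>C. r j * r k < 0}"
    have "L \<noteq> {}"
      using False rnz k by (auto simp: L_def) (metis linorder_neqE_linordered_idom mult_eq_0_iff)
    then obtain l where l: "l \<in> L" and lmin: "\<And>j. j \<in> L \<Longrightarrow> \<bar>r l\<bar> \<le> \<bar>r j\<bar>"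
      using ex_is_arg_min_if_finite[of L "\<lambda>j. \<bar>r j\<bar>"] by (auto simp: is_arg_min_def not_less)
    have kl: "r k * r l < 0" and lC: "l \<in> C" using l by (auto simp: L_def mult.commute)
    have "0 \<le> r i * (r i - r l)" if i: "i \<in> C" for i
    proof (cases "i \<in> L")
      case True then show ?thesis using mult_diff_nonneg_if_abs_le lmin by blast
    next
      case False
      then have "0 < r i * r k"
        using i rnz[OF i] rnz[OF k] by (auto simp: L_def not_less order.strict_iff_order)
      then have "r i * r l < 0" using kl by (auto simp: zero_less_mult_iff mult_less_0_iff)
      then show ?thesis by (simp add: algebra_simps) (smt (verit) zero_le_square)
    qed
    then have "conformal (y - r l *\<^sub>R c) y" "vsupp (y - r l *\<^sub>R c) \<subset> vsupp y"
      using shift[OF lC] by auto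
    then show ?thesis
      using that[OF scaleR_shift_combination(2,3,1)[OF kl]] p span by blast
  qed
qed

section \<open>Certificates for unrealizable sign vectors\<close>

definition slack_signs :: "('m::finite \<Rightarrow> real^'n::finite) \<Rightarrow> real^'m \<Rightarrow> real^'n \<Rightarrow> 'm \<Rightarrow> real" where
  "slack_signs u b x i = sgn (u i \<bullet> x - b $ i)"

text \<open>If \<open>s = slack_signs u b x\<close> then, since \<open>\<Sum>\<^sub>i y\<^sub>i u\<^sub>i = 0\<close>, the slacks satisfy
  \<open>\<Sum>\<^sub>i y\<^sub>i (u\<^sub>i \<bullet> x - b\<^sub>i) = - y \<bullet> b\<close>, while the sign conditions make every summand nonnegative.\<close>

definition certifies_unrealizable ::
    "('m::finite \<Rightarrow> real^'n::finite) \<Rightarrow> real^'m \<Rightarrow> ('m \<Rightarrow> real) \<Rightarrow> real^'m \<Rightarrow> bool" where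
  "certifies_unrealizable u b s y \<longleftrightarrow> y \<in> dependencies u \<and> (\<forall>i. s i \<noteq> 0 \<longrightarrow> 0 \<le> s i * y $ i) \<and>
     (0 < y \<bullet> b \<or> (y \<bullet> b = 0 \<and> (\<exists>i. s i \<noteq> 0 \<and> y $ i \<noteq> 0)))"

lemma certifies_unrealizable_imp_unrealizable:
  assumes cert: "certifies_unrealizable u b s y"
  shows "s \<notin> range (slack_signs u b)"
proof
  assume "s \<in> range (slack_signs u b)"
  then obtain x where s: "\<And>i. s i = sgn (u i \<bullet> x - b $ i)" by (auto simp: slack_signs_def)
  define w where "w i = u i \<bullet> x - b $ i" for i
  have "(\<Sum>i\<in>UNIV. y $ i * (u i \<bullet> x)) = (\<Sum>i\<in>UNIV. (y $ i) *\<^sub>R u i) \<bullet> x"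
    by (simp add: inner_sum_left)
  also have "\<dots> = 0" using cert by (simp add: certifies_unrealizable_def dependencies_def)
  finally have yb: "y \<bullet> b = - (\<Sum>i\<in>UNIV. y $ i * w i)"
    by (simp add: inner_vec_def w_def right_diff_distrib sum_subtractf)
  have yw: "y $ i * w i = (s i * y $ i) * \<bar>w i\<bar>" for i
    using s[of i] by (metis w_def sgn_mult_abs mult.commute mult.left_commute)
  have nonneg: "0 \<le> y $ i * w i" for i
  proof (cases "s i = 0")
    case True
    then show ?thesis using s[of i] by (simp add: w_def sgn_zero_iff)
  next
    case False
    then have "0 \<le> s i * y $ i" using cert by (simp add: certifies_unrealizable_def)
    then show ?thesis by (simp add: yw)
  qed
  then have "0 \<le> (\<Sum>i\<in>UNIV. y $ i * w i)" by (simp add: sum_nonneg)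
  then obtain i where i: "s i \<noteq> 0" "y $ i \<noteq> 0" and "y \<bullet> b = 0"
    using cert yb by (auto simp: certifies_unrealizable_def)
  have "0 < s i * y $ i" using cert i by (auto simp: certifies_unrealizable_def order.strict_iff_order)
  moreover have "w i \<noteq> 0" using s[of i] i(1) by (auto simp: w_def)
  ultimately have "0 < y $ i * w i" by (simp add: yw)
  then have "0 < (\<Sum>i\<in>UNIV. y $ i * w i)" using nonneg by (intro sum_pos2) auto
  then show False using yb \<open>y \<bullet> b = 0\<close> by linarith
qed

lemma certifies_unrealizable_conformal_split:
  assumes cert: "certifies_unrealizable u b s y" and y: "y = \<alpha> *\<^sub>R p + \<beta> *\<^sub>R q"
    and pos: "0 < \<alpha>" "0 < \<beta>" and dep: "p \<in> dependencies u" "q \<in> dependencies u"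
    and conf: "conformal p y" "conformal q y"
  shows "certifies_unrealizable u b s p \<or> certifies_unrealizable u b s q"
proof -
  have signs: "\<forall>i. s i \<noteq> 0 \<longrightarrow> 0 \<le> s i * z $ i" if "conformal z y" for z
  proof (intro allI impI)
    fix i assume "s i \<noteq> 0"
    then have "0 \<le> s i * y $ i" using cert by (simp add: certifies_unrealizable_def)
    moreover have "z $ i = 0 \<or> 0 < z $ i * y $ i" using that by (simp add: conformal_def)
    ultimately show "0 \<le> s i * z $ i" by (auto simp: zero_le_mult_iff zero_less_mult_iff)
  qed
  have yb: "y \<bullet> b = \<alpha> * (p \<bullet> b) + \<beta> * (q \<bullet> b)" using y by (simp add: inner_add_left)
  show ?thesis
  proof (cases "0 < p \<bullet> b \<or> 0 < q \<bullet> b")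
    case True
    then show ?thesis using dep signs conf by (auto simp: certifies_unrealizable_def)
  next
    case False
    then have "\<alpha> * (p \<bullet> b) \<le> 0" "\<beta> * (q \<bullet> b) \<le> 0" using pos by (auto simp: mult_nonneg_nonpos)
    then obtain i where i: "s i \<noteq> 0" "y $ i \<noteq> 0" and "y \<bullet> b = 0"
      using cert yb by (auto simp: certifies_unrealizable_def)
    then have "\<alpha> * (p \<bullet> b) = 0" "\<beta> * (q \<bullet> b) = 0"
      using yb \<open>\<alpha> * (p \<bullet> b) \<le> 0\<close> \<open>\<beta> * (q \<bullet> b) \<le> 0\<close> by linarith+
    then have "p \<bullet> b = 0" "q \<bullet> b = 0" using pos by simp_all
    moreover have "p $ i \<noteq> 0 \<or> q $ i \<noteq> 0" using i y by auto
    ultimately show ?thesis using dep signs conf i by (auto simp: certifies_unrealizable_def)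
  qed
qed

text \<open>A certificate is inherited by one of the summands of a conformal decomposition, so induction on
  the support ends at a circuit.\<close>

lemma certifies_unrealizable_circuit:
  assumes cv: "\<forall>C. is_circuit u C \<longrightarrow> is_circuit_vector u C (cv C)"
  shows "certifies_unrealizable u b s y \<Longrightarrow>
    \<exists>C t. is_circuit u C \<and> certifies_unrealizable u b s (t *\<^sub>R cv C)"
proof (induction "card (vsupp y)" arbitrary: y rule: less_induct)
  case less
  have dep: "y \<in> dependencies u" and "y \<noteq> 0"
    using less.prems by (auto simp: certifies_unrealizable_def)
  then obtain C where C: "is_circuit u C" "C \<subseteq> vsupp y" by (rule circuit_subset_vsupp)
  have c: "is_circuit_vector u C (cv C)" using cv C by blast
  show ?case
  proof (cases "C = vsupp y")
    case True
    then obtain t where "y = t *\<^sub>R cv C" using dependency_on_circuit[OF C(1) c dep] by blast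
    then show ?thesis using less.prems C(1) by blast
  next
    case False
    have "vsupp (cv C) \<noteq> {}" "vsupp (cv C) \<subset> vsupp y"
      using vsupp_circuit_vector[OF c] circuit_nonempty[OF C(1)] C(2) False by auto
    then obtain p q and \<alpha> \<beta> :: real where d: "0 < \<alpha>" "0 < \<beta>" "y = \<alpha> *\<^sub>R p + \<beta> *\<^sub>R q"
      "conformal p y" "conformal q y" "vsupp p \<subset> vsupp y" "vsupp q \<subset> vsupp y"
      "p \<in> span {y, cv C}" "q \<in> span {y, cv C}"
      by (rule conformal_decomposition)
    have "span {y, cv C} \<subseteq> dependencies u"
      using dep circuit_vector_dependency[OF c] by (intro span_minimal subspace_dependencies) auto
    then have "certifies_unrealizable u b s p \<or> certifies_unrealizable u b s q"
      using d by (intro certifies_unrealizable_conformal_split[OF less.prems d(3,1,2)]) auto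
    moreover have "card (vsupp p) < card (vsupp y)" "card (vsupp q) < card (vsupp y)"
      using d(6,7) by (simp_all add: psubset_card_mono)
    ultimately show ?thesis using less.hyps by blast
  qed
qed

lemma certifies_unrealizable_sgn_cong:
  assumes "certifies_unrealizable u b s y" "sgn (y \<bullet> a) = sgn (y \<bullet> b)"
  shows "certifies_unrealizable u a s y"
proof -
  have "0 < y \<bullet> a \<longleftrightarrow> 0 < y \<bullet> b" "y \<bullet> a = 0 \<longleftrightarrow> y \<bullet> b = 0"
    using assms(2) by (metis sgn_greater sgn_0_0 sgn_zero_iff)+
  then show ?thesis using assms(1) by (simp add: certifies_unrealizable_def)
qed

section \<open>Motzkin's alternative\<close>

lemma convex_hull_image_explicit:
  assumes "finite A" "x \<in> convex hull (g ` A)"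
  obtains w where "\<forall>i\<in>A. 0 \<le> w i" "sum w A = 1" "x = (\<Sum>i\<in>A. w i *\<^sub>R g i)"
proof -
  define H where "H = {\<Sum>i\<in>A. w i *\<^sub>R g i | w. (\<forall>i\<in>A. 0 \<le> w i) \<and> sum w A = 1}"
  have "g ` A \<subseteq> H"
  proof
    fix p assume "p \<in> g ` A"
    then obtain j where j: "j \<in> A" "p = g j" by blast
    then have "p = (\<Sum>i\<in>A. (if i = j then 1 else 0) *\<^sub>R g i)"
      using assms(1) by (simp add: if_distrib[of "\<lambda>r. r *\<^sub>R _"] cong: if_cong)
    then show "p \<in> H" unfolding H_def using j assms(1)
      by (intro CollectI exI[of _ "\<lambda>i. if i = j then 1 else 0"]) auto
  qed
  moreover have "convex H"
  proof (rule convexI)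
    fix x y and s t :: real
    assume "x \<in> H" "y \<in> H" and st: "0 \<le> s" "0 \<le> t" "s + t = 1"
    then obtain v w where v: "\<forall>i\<in>A. 0 \<le> v i" "sum v A = 1" "x = (\<Sum>i\<in>A. v i *\<^sub>R g i)"
      and w: "\<forall>i\<in>A. 0 \<le> w i" "sum w A = 1" "y = (\<Sum>i\<in>A. w i *\<^sub>R g i)"
      unfolding H_def by blast
    have "s *\<^sub>R x + t *\<^sub>R y = (\<Sum>i\<in>A. (s * v i + t * w i) *\<^sub>R g i)"
      using v w by (simp add: scaleR_add_left sum.distrib scaleR_sum_right)
    moreover have "(\<Sum>i\<in>A. s * v i + t * w i) = 1"
      using v w st by (simp add: sum.distrib flip: sum_distrib_left)
    ultimately show "s *\<^sub>R x + t *\<^sub>R y \<in> H"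
      unfolding H_def using v w st by (intro CollectI exI[of _ "\<lambda>i. s * v i + t * w i"]) auto
  qed
  ultimately have "convex hull (g ` A) \<subseteq> H" by (rule hull_minimal)
  then show ?thesis using assms(2) that unfolding H_def by blast
qed

lemma span_image_explicit:
  assumes "finite Z" "x \<in> span (h ` Z)"
  obtains \<mu> where "x = (\<Sum>j\<in>Z. \<mu> j *\<^sub>R h j)"
proof -
  have "\<exists>\<mu>. x = (\<Sum>j\<in>Z. \<mu> j *\<^sub>R h j)"
    using assms(2)
  proof (induction rule: span_induct_alt)
    case base
    show ?case by (intro exI[of _ "\<lambda>_. 0"]) simp
  next
    case (step c p y)
    then obtain j \<mu> where "j \<in> Z" "p = h j" "y = (\<Sum>j\<in>Z. \<mu> j *\<^sub>R h j)" by blast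
    then have "c *\<^sub>R p + y = (\<Sum>i\<in>Z. (\<mu> i + (if i = j then c else 0)) *\<^sub>R h i)"
      using assms(1) by (simp add: scaleR_add_left sum.distrib if_distrib[of "\<lambda>r. r *\<^sub>R _"] cong: if_cong)
    then show ?case by (intro exI[of _ "\<lambda>i. \<mu> i + (if i = j then c else 0)"])
  qed
  then show ?thesis using that by blast
qed

text \<open>Gordan's alternative, proved by separating the convex hull of the \<open>g i\<close> from the span of the
  \<open>h j\<close>; a common point of the two gives the second case.\<close>

lemma positive_functional_or_convex_dependence:
  fixes g :: "'i \<Rightarrow> 'a::euclidean_space" and h :: "'j \<Rightarrow> 'a"
  assumes A: "finite A" "A \<noteq> {}" and Z: "finite Z"
  obtains z where "\<forall>i\<in>A. 0 < z \<bullet> g i" "\<forall>j\<in>Z. z \<bullet> h j = 0"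
    | w \<mu> where "\<forall>i\<in>A. 0 \<le> w i" "sum w A = 1" "(\<Sum>i\<in>A. w i *\<^sub>R g i) = (\<Sum>j\<in>Z. \<mu> j *\<^sub>R h j)"
proof (cases "convex hull (g ` A) \<inter> span (h ` Z) = {}")
  case True
  have "\<exists>a d. (\<forall>x\<in>convex hull (g ` A). a \<bullet> x < d) \<and> (\<forall>x\<in>span (h ` Z). d < a \<bullet> x)"
    using True A by (intro separating_hyperplane_compact_closed)
      (auto simp: compact_convex_hull finite_imp_compact subspace_imp_convex)
  then obtain a d where sepA: "\<And>x. x \<in> convex hull (g ` A) \<Longrightarrow> a \<bullet> x < d"
    and sepZ: "\<And>x. x \<in> span (h ` Z) \<Longrightarrow> d < a \<bullet> x" by blast
  have "d < 0" using sepZ[of 0] by (simp add: span_zero)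
  have "a \<bullet> x = 0" if "x \<in> span (h ` Z)" for x
  proof (rule ccontr)
    assume "a \<bullet> x \<noteq> 0"
    then have "a \<bullet> (((d - 1) / (a \<bullet> x)) *\<^sub>R x) = d - 1" by simp
    moreover have "((d - 1) / (a \<bullet> x)) *\<^sub>R x \<in> span (h ` Z)" using that by (rule span_scale)
    ultimately show False using sepZ by fastforce
  qed
  then have "\<forall>j\<in>Z. (- a) \<bullet> h j = 0" by (simp add: span_base)
  moreover have "\<forall>i\<in>A. 0 < (- a) \<bullet> g i"
    using sepA \<open>d < 0\<close> by (fastforce intro: hull_inc)
  ultimately show ?thesis using that(1) by blast
next
  case False
  then obtain p where p: "p \<in> convex hull (g ` A)" "p \<in> span (h ` Z)" by blast
  obtain w where "\<forall>i\<in>A. 0 \<le> w i" "sum w A = 1" "p = (\<Sum>i\<in>A. w i *\<^sub>R g i)"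
    using convex_hull_image_explicit[OF A(1) p(1)] by blast
  moreover obtain \<mu> where "p = (\<Sum>j\<in>Z. \<mu> j *\<^sub>R h j)"
    using span_image_explicit[OF Z p(2)] by blast
  ultimately show ?thesis using that(2) by metis
qed

lemma certifies_unrealizable_of_convex_weights:
  fixes u :: "'m::finite \<Rightarrow> real^'n::finite"
  assumes s: "\<And>i. s i \<in> {-1, 0, 1}"
    and w: "0 \<le> w0" "\<And>i. s i \<noteq> 0 \<Longrightarrow> 0 \<le> w i" "w0 + (\<Sum>i | s i \<noteq> 0. w i) = 1"
    and comb: "(0, w0) + (\<Sum>i | s i \<noteq> 0. (w i * s i) *\<^sub>R (u i, - b $ i))
      = (\<Sum>i | s i = 0. \<mu> i *\<^sub>R (u i, - b $ i))"
  shows "certifies_unrealizable u b s (\<chi> i. if s i \<noteq> 0 then w i * s i else - \<mu> i)"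
    (is "certifies_unrealizable u b s ?y")
proof -
  define h where "h i = (u i, - b $ i)" for i
  have "(\<Sum>i\<in>UNIV. ?y $ i *\<^sub>R h i)
      = (\<Sum>i | s i \<noteq> 0. (w i * s i) *\<^sub>R h i) - (\<Sum>i | s i = 0. \<mu> i *\<^sub>R h i)"
    by (simp add: if_distrib[of "\<lambda>r. r *\<^sub>R _"] sum.If_cases Compl_eq sum_negf)
  also have "\<dots> = - (0, w0)"
  proof -
    have "(0, w0) + (\<Sum>i | s i \<noteq> 0. (w i * s i) *\<^sub>R h i) = (\<Sum>i | s i = 0. \<mu> i *\<^sub>R h i)"
      using comb by (simp only: h_def)
    from this[symmetric] show ?thesis by (simp add: algebra_simps)
  qed
  finally have dep: "(\<Sum>i\<in>UNIV. ?y $ i *\<^sub>R h i) = - (0, w0)" .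
  have "fst (\<Sum>i\<in>UNIV. ?y $ i *\<^sub>R h i) = (\<Sum>i\<in>UNIV. ?y $ i *\<^sub>R u i)"
    by (simp add: fst_sum h_def)
  then have "?y \<in> dependencies u" using dep by (simp add: dependencies_def)
  moreover have "snd (\<Sum>i\<in>UNIV. ?y $ i *\<^sub>R h i) = - (?y \<bullet> b)"
    by (simp add: snd_sum h_def inner_vec_def sum_negf)
  then have "?y \<bullet> b = w0" using dep by simp
  moreover have "0 \<le> s i * ?y $ i" if "s i \<noteq> 0" for i
    using w(2)[OF that] s[of i] that by auto
  moreover have "0 < w0 \<or> (\<exists>i. s i \<noteq> 0 \<and> ?y $ i \<noteq> 0)"
  proof (rule disj_imp[THEN iffD2], intro impI)
    assume "\<not> 0 < w0"
    then have "(\<Sum>i | s i \<noteq> 0. w i) = 1" using w(1,3) by simp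
    then obtain i where "s i \<noteq> 0" "w i \<noteq> 0" by (metis (mono_tags) mem_Collect_eq sum.neutral zero_neq_one)
    then show "\<exists>i. s i \<noteq> 0 \<and> ?y $ i \<noteq> 0" by auto
  qed
  ultimately show ?thesis using w(1) by (auto simp: certifies_unrealizable_def)
qed

text \<open>Motzkin's alternative for slack signs: apply Gordan's alternative in
  \<open>\<real>\<^sup>n \<times> \<real>\<close> to \<open>(0, 1)\<close>, the vectors \<open>s\<^sub>i (u\<^sub>i, -b\<^sub>i)\<close> with \<open>s\<^sub>i \<noteq> 0\<close> and the vectors \<open>(u\<^sub>i, -b\<^sub>i)\<close> with
  \<open>s\<^sub>i = 0\<close>: a functional \<open>(x, \<tau>)\<close> of the first kind has \<open>\<tau> > 0\<close> and realizes \<open>s\<close> at \<open>x / \<tau>\<close>.\<close>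

lemma unrealizable_imp_certificate:
  fixes u :: "'m::finite \<Rightarrow> real^'n::finite"
  assumes s: "\<And>i. s i \<in> {-1, 0, 1}" and unreal: "s \<notin> range (slack_signs u b)"
  obtains y where "certifies_unrealizable u b s y"
proof -
  define N where "N = {i. s i \<noteq> 0}"
  define A where "A = insert None (Some ` N)"
  define h :: "'m \<Rightarrow> (real^'n) \<times> real" where "h i = (u i, - b $ i)" for i
  define g :: "'m option \<Rightarrow> (real^'n) \<times> real"
    where "g j = (case j of None \<Rightarrow> (0, 1) | Some i \<Rightarrow> s i *\<^sub>R h i)" for j
  have sumA: "sum f A = f None + (\<Sum>i\<in>N. f (Some i))" for f :: "'m option \<Rightarrow> 'z::comm_monoid_add"
    by (auto simp: A_def sum.reindex)
  show ?thesis
  proof (rule positive_functional_or_convex_dependence[of A "{i. s i = 0}" g h])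
    show "finite A" "A \<noteq> {}" "finite {i. s i = 0}" by (auto simp: A_def)
  next
    fix z assume pos: "\<forall>j\<in>A. 0 < z \<bullet> g j" and zero: "\<forall>i\<in>{i. s i = 0}. z \<bullet> h i = 0"
    obtain x \<tau> where z: "z = (x, \<tau>)" by (cases z)
    have "0 < \<tau>" using pos by (simp add: A_def g_def z)
    have "s = slack_signs u b ((1 / \<tau>) *\<^sub>R x)"
    proof
      fix i
      have "sgn (z \<bullet> h i) = s i"
      proof (cases "s i = 0")
        case False
        then have "0 < s i * (z \<bullet> h i)" using pos by (simp add: A_def N_def g_def)
        then show ?thesis using s[of i] by (auto simp: sgn_if zero_less_mult_iff)
      qed (use zero in simp)
      moreover have "u i \<bullet> ((1 / \<tau>) *\<^sub>R x) - b $ i = (z \<bullet> h i) / \<tau>"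
        using \<open>0 < \<tau>\<close> by (simp add: z h_def inner_commute field_simps)
      ultimately show "s i = slack_signs u b ((1 / \<tau>) *\<^sub>R x) i"
        using \<open>0 < \<tau>\<close> by (simp add: slack_signs_def sgn_divide)
    qed
    then show ?thesis using unreal by blast
  next
    fix w \<mu> assume w: "\<forall>j\<in>A. 0 \<le> w j" "sum w A = 1"
      and comb: "(\<Sum>j\<in>A. w j *\<^sub>R g j) = (\<Sum>i\<in>{i. s i = 0}. \<mu> i *\<^sub>R h i)"
    have "0 \<le> w None" "\<And>i. s i \<noteq> 0 \<Longrightarrow> 0 \<le> w (Some i)"
      using w(1) by (auto simp: A_def N_def)
    moreover have "w None + (\<Sum>i | s i \<noteq> 0. w (Some i)) = 1" using w(2) by (simp add: sumA N_def)
    moreover have "(0, w None) + (\<Sum>i | s i \<noteq> 0. (w (Some i) * s i) *\<^sub>R h i)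
        = (\<Sum>i | s i = 0. \<mu> i *\<^sub>R h i)"
      using comb by (simp add: sumA g_def N_def mult.commute)
    ultimately have "certifies_unrealizable u b s (\<chi> i. if s i \<noteq> 0 then w (Some i) * s i else - \<mu> i)"
      unfolding h_def by (rule certifies_unrealizable_of_convex_weights[OF s])
    then show ?thesis by (rule that)
  qed
qed

lemma slack_signs_range_subset:
  assumes cv: "\<forall>C. is_circuit u C \<longrightarrow> is_circuit_vector u C (cv C)"
    and signs: "\<forall>C. is_circuit u C \<longrightarrow> sgn (cv C \<bullet> a) = sgn (cv C \<bullet> b)"
  shows "range (slack_signs u a) \<subseteq> range (slack_signs u b)"
proof
  fix s assume sa: "s \<in> range (slack_signs u a)"
  show "s \<in> range (slack_signs u b)"
  proof (rule ccontr)
    assume "s \<notin> range (slack_signs u b)"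
    moreover have "s i \<in> {-1, 0, 1}" for i using sa by (auto simp: slack_signs_def sgn_if split: if_splits)
    ultimately obtain y where "certifies_unrealizable u b s y"
      using unrealizable_imp_certificate by blast
    then obtain C t where C: "is_circuit u C" "certifies_unrealizable u b s (t *\<^sub>R cv C)"
      using certifies_unrealizable_circuit[OF cv] by blast
    have "sgn ((t *\<^sub>R cv C) \<bullet> a) = sgn ((t *\<^sub>R cv C) \<bullet> b)"
      using signs C(1) by (simp add: sgn_mult)
    then have "certifies_unrealizable u a s (t *\<^sub>R cv C)"
      using C(2) by (rule certifies_unrealizable_sgn_cong[rotated])
    then show False using sa by (simp add: certifies_unrealizable_imp_unrealizable)
  qed
qed

section \<open>Faces and normal cones of the polyhedra\<close>

definition admissible_signs :: "'m set \<Rightarrow> 'm set \<Rightarrow> 'm set \<Rightarrow> ('m \<Rightarrow> real) \<Rightarrow> bool" where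
  "admissible_signs I J K \<sigma> \<longleftrightarrow> (\<forall>i\<in>I. \<sigma> i = 0) \<and> (\<forall>i\<in>J. \<sigma> i \<le> 0) \<and> (\<forall>i\<in>K. 0 \<le> \<sigma> i)"

lemma mem_polyP_iff_admissible: "x \<in> polyP u a I J K \<longleftrightarrow> admissible_signs I J K (slack_signs u a x)"
  by (simp add: polyP_def admissible_signs_def slack_signs_def sgn_le_0_iff sgn_zero_iff)

lemma slack_signs_eq_0_iff: "slack_signs u a x i = 0 \<longleftrightarrow> u i \<bullet> x = a $ i"
  by (simp add: slack_signs_def sgn_zero_iff)

definition tight_face :: "('m::finite \<Rightarrow> real^'n::finite) \<Rightarrow> real^'m \<Rightarrow>
    'm set \<Rightarrow> 'm set \<Rightarrow> 'm set \<Rightarrow> 'm set \<Rightarrow> (real^'n) set" where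
  "tight_face u a I J K S = {x \<in> polyP u a I J K. \<forall>i\<in>S. u i \<bullet> x = a $ i}"

lemma convex_polyP: "convex (polyP u a I J K)"
proof -
  have "polyP u a I J K = (\<Inter>i\<in>I. {x. u i \<bullet> x = a $ i}) \<inter> (\<Inter>i\<in>J. {x. u i \<bullet> x \<le> a $ i})
      \<inter> (\<Inter>i\<in>K. {x. u i \<bullet> x \<ge> a $ i})" by (auto simp: polyP_def)
  then show ?thesis
    by (simp add: convex_Int convex_INT convex_hyperplane convex_halfspace_le convex_halfspace_ge)
qed

lemma tight_face_face_of:
  assumes part: "I \<union> J \<union> K = UNIV"
  shows "tight_face u a I J K S face_of polyP u a I J K"
proof (cases "S = {}")
  case True
  then show ?thesis by (simp add: tight_face_def face_of_refl convex_polyP)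
next
  case False
  let ?P = "polyP u a I J K"
  have fi: "?P \<inter> {x. u i \<bullet> x = a $ i} face_of ?P" for i
  proof -
    have "i \<in> I \<or> i \<in> J \<or> i \<in> K" using part by auto
    then show ?thesis
    proof (elim disjE)
      assume "i \<in> I"
      then have "?P \<inter> {x. u i \<bullet> x = a $ i} = ?P" by (auto simp: polyP_def)
      then show ?thesis by (simp add: face_of_refl convex_polyP)
    next
      assume "i \<in> J"
      then show ?thesis by (intro face_of_Int_supporting_hyperplane_le convex_polyP) (auto simp: polyP_def)
    next
      assume "i \<in> K"
      then show ?thesis by (intro face_of_Int_supporting_hyperplane_ge convex_polyP) (auto simp: polyP_def)
    qed
  qed
  have "tight_face u a I J K S = \<Inter>((\<lambda>i. ?P \<inter> {x. u i \<bullet> x = a $ i}) ` S)"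
    using False by (auto simp: tight_face_def)
  also have "\<dots> face_of ?P" by (rule face_of_Inter) (use False fi in auto)
  finally show ?thesis .
qed

lemma eventually_add_mult_le:
  fixes c r t :: real
  assumes "c \<le> r" "c = r \<Longrightarrow> t \<le> 0"
  shows "\<forall>\<^sub>F e in at_right 0. c + e * t \<le> r"
proof (cases "c = r")
  case True
  show ?thesis
    by (rule eventually_mono[OF eventually_at_right_less]) (use True assms(2) in \<open>simp add: mult_nonneg_nonpos\<close>)
next
  case False
  then have "c < r" using assms(1) by simp
  have "((\<lambda>e. c + e * t) \<longlongrightarrow> c + 0 * t) (at_right 0)" by (intro tendsto_intros)
  then have "((\<lambda>e. c + e * t) \<longlongrightarrow> c) (at_right 0)" by simp
  from order_tendstoD(2)[OF this \<open>c < r\<close>] show ?thesis by (rule eventually_mono) simp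
qed

lemma eventually_add_mult_ge:
  fixes c r t :: real
  assumes "r \<le> c" "c = r \<Longrightarrow> 0 \<le> t"
  shows "\<forall>\<^sub>F e in at_right 0. r \<le> c + e * t"
proof -
  have "\<forall>\<^sub>F e in at_right 0. (-c) + e * (-t) \<le> -r" by (rule eventually_add_mult_le) (use assms in auto)
  then show ?thesis by (rule eventually_mono) simp
qed

lemma polyP_add_small_multiple:
  assumes x: "x \<in> polyP u a I J K"
    and dI: "\<forall>i\<in>I. u i \<bullet> d = 0"
    and dJ: "\<forall>i\<in>J. u i \<bullet> x = a $ i \<longrightarrow> u i \<bullet> d \<le> 0"
    and dK: "\<forall>i\<in>K. u i \<bullet> x = a $ i \<longrightarrow> u i \<bullet> d \<ge> 0"
  shows "\<exists>e>0. x + e *\<^sub>R d \<in> polyP u a I J K"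
proof -
  define ok where "ok e i \<longleftrightarrow> (i \<in> I \<longrightarrow> u i \<bullet> x + e * (u i \<bullet> d) = a $ i)
    \<and> (i \<in> J \<longrightarrow> u i \<bullet> x + e * (u i \<bullet> d) \<le> a $ i)
    \<and> (i \<in> K \<longrightarrow> a $ i \<le> u i \<bullet> x + e * (u i \<bullet> d))" for e i
  have "\<forall>\<^sub>F e in at_right 0. ok e i" for i
    unfolding ok_def
  proof (intro eventually_conj)
    show "\<forall>\<^sub>F e in at_right 0. i \<in> I \<longrightarrow> u i \<bullet> x + e * (u i \<bullet> d) = a $ i"
      by (rule always_eventually) (use x dI in \<open>auto simp: polyP_def\<close>)
    show "\<forall>\<^sub>F e in at_right 0. i \<in> J \<longrightarrow> u i \<bullet> x + e * (u i \<bullet> d) \<le> a $ i"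
      using eventually_add_mult_le[of "u i \<bullet> x" "a $ i" "u i \<bullet> d"] x dJ
      by (cases "i \<in> J") (auto simp: polyP_def)
    show "\<forall>\<^sub>F e in at_right 0. i \<in> K \<longrightarrow> a $ i \<le> u i \<bullet> x + e * (u i \<bullet> d)"
      using eventually_add_mult_ge[of "a $ i" "u i \<bullet> x" "u i \<bullet> d"] x dK
      by (cases "i \<in> K") (auto simp: polyP_def)
  qed
  then have "\<forall>\<^sub>F e in at_right 0. 0 < e \<and> (\<forall>i. ok e i)"
    by (intro eventually_conj eventually_at_right_less eventually_all_finite)
  then obtain e where "0 < e" "\<forall>i. ok e i"
    using eventually_happens'[of "at_right (0::real)"] by auto
  then show ?thesis by (intro exI[of _ e]) (simp add: ok_def polyP_def inner_add_right)
qed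

lemma face_of_mem_if_extends_beyond:
  assumes C: "C face_of P" and x: "x \<in> C" and z: "z \<in> P"
    and w: "x + e *\<^sub>R (x - z) \<in> P" and e: "0 < e"
  shows "z \<in> C"
proof (cases "z = x")
  case False
  define w where "w = x + e *\<^sub>R (x - z)"
  have "(1 + e) *\<^sub>R x = w + e *\<^sub>R z" by (simp add: w_def algebra_simps)
  then have "(1 / (1 + e)) *\<^sub>R ((1 + e) *\<^sub>R x) = (1 / (1 + e)) *\<^sub>R (w + e *\<^sub>R z)" by simp
  moreover have "1 + e \<noteq> 0" using e by simp
  ultimately have "x = (1 / (1 + e)) *\<^sub>R (w + e *\<^sub>R z)" by simp
  moreover have "1 - 1 / (1 + e) = e / (1 + e)" using e by (simp add: field_simps)
  ultimately have "x = (1 - 1 / (1 + e)) *\<^sub>R z + (1 / (1 + e)) *\<^sub>R w"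
    by (simp add: scaleR_add_right)
  moreover have "w - z = (1 + e) *\<^sub>R (x - z)" by (simp add: w_def algebra_simps)
  then have "z \<noteq> w" using False \<open>1 + e \<noteq> 0\<close> by auto
  ultimately have "x \<in> open_segment z w"
    using e by (auto simp: in_segment intro!: exI[of _ "1 / (1 + e)"])
  then show ?thesis using face_ofD[OF C _ z] w x by (simp add: w_def)
qed (use x in simp)

text \<open>A nonempty face is cut out by the constraints that are tight at a relative interior point \<open>x\<close>:
  every other point \<open>z\<close> of that tight face lies on a segment through \<open>x\<close> that extends beyond \<open>x\<close>
  inside the polyhedron.\<close>

lemma face_eq_tight_face:
  assumes part: "I \<union> J \<union> K = UNIV" and C: "C face_of polyP u a I J K" and ne: "C \<noteq> {}"
  obtains x where "x \<in> rel_interior C" "C = tight_face u a I J K {i. u i \<bullet> x = a $ i}"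
proof -
  let ?P = "polyP u a I J K" and ?T = "tight_face u a I J K"
  obtain x where x: "x \<in> rel_interior C"
    using rel_interior_eq_empty face_of_imp_convex[OF C] ne by blast
  have xC: "x \<in> C" using x rel_interior_subset by blast
  have xP: "x \<in> ?P" using xC face_of_imp_subset[OF C] by blast
  have "x \<in> ?T {i. u i \<bullet> x = a $ i}" using xP by (simp add: tight_face_def)
  then have "C \<subseteq> ?T {i. u i \<bullet> x = a $ i}"
    using subset_of_face_of[OF tight_face_face_of[OF part] face_of_imp_subset[OF C]] x by blast
  moreover have "?T {i. u i \<bullet> x = a $ i} \<subseteq> C"
  proof
    fix z assume z: "z \<in> ?T {i. u i \<bullet> x = a $ i}"
    then have zP: "z \<in> ?P" and tight: "\<And>i. u i \<bullet> x = a $ i \<Longrightarrow> u i \<bullet> z = a $ i"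
      by (auto simp: tight_face_def)
    have "\<exists>e>0. x + e *\<^sub>R (x - z) \<in> ?P"
      using xP zP tight by (intro polyP_add_small_multiple) (auto simp: polyP_def inner_diff_right)
    then show "z \<in> C" using face_of_mem_if_extends_beyond[OF C xC zP] by blast
  qed
  ultimately show ?thesis using that x by blast
qed

definition tight_normal_cone ::
    "('m::finite \<Rightarrow> real^'n::finite) \<Rightarrow> 'm set \<Rightarrow> 'm set \<Rightarrow> 'm set \<Rightarrow> 'm set \<Rightarrow> (real^'n) set" where
  "tight_normal_cone u I J K Z = {v. \<forall>d. (\<forall>i\<in>I. u i \<bullet> d = 0) \<and> (\<forall>i\<in>J \<inter> Z. u i \<bullet> d \<le> 0) \<and>
     (\<forall>i\<in>K \<inter> Z. 0 \<le> u i \<bullet> d) \<longrightarrow> v \<bullet> d \<le> 0}"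

lemma normal_cone_eq_maximizers:
  assumes "x \<in> P" shows "normal_cone P x = {v. \<forall>z\<in>P. v \<bullet> z \<le> v \<bullet> x}"
proof (intro set_eqI iffI CollectI ballI)
  fix v assume "v \<in> normal_cone P x"
  then have eq: "ereal (v \<bullet> x) = (SUP z\<in>P. ereal (v \<bullet> z))" by (simp add: normal_cone_def support_fun_def)
  fix z assume "z \<in> P"
  then have "ereal (v \<bullet> z) \<le> (SUP z\<in>P. ereal (v \<bullet> z))" by (rule SUP_upper)
  then show "v \<bullet> z \<le> v \<bullet> x" unfolding eq[symmetric] by simp
next
  fix v assume "v \<in> {v. \<forall>z\<in>P. v \<bullet> z \<le> v \<bullet> x}"
  then have h: "\<And>z. z \<in> P \<Longrightarrow> v \<bullet> z \<le> v \<bullet> x" by blast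
  have "(SUP z\<in>P. ereal (v \<bullet> z)) \<le> ereal (v \<bullet> x)" by (rule SUP_least) (simp add: h)
  moreover have "ereal (v \<bullet> x) \<le> (SUP z\<in>P. ereal (v \<bullet> z))" by (rule SUP_upper[OF assms])
  ultimately show "v \<in> normal_cone P x" by (simp add: normal_cone_def support_fun_def antisym)
qed

lemma normal_cone_polyP:
  assumes xP: "x \<in> polyP u a I J K"
  shows "normal_cone (polyP u a I J K) x = tight_normal_cone u I J K {i. u i \<bullet> x = a $ i}"
proof (unfold normal_cone_eq_maximizers[OF xP], intro set_eqI iffI)
  fix v assume "v \<in> {v. \<forall>z\<in>polyP u a I J K. v \<bullet> z \<le> v \<bullet> x}"
  then have h: "\<And>z. z \<in> polyP u a I J K \<Longrightarrow> v \<bullet> z \<le> v \<bullet> x" by blast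
  show "v \<in> tight_normal_cone u I J K {i. u i \<bullet> x = a $ i}"
    unfolding tight_normal_cone_def
  proof (intro CollectI allI impI)
    fix d assume d: "(\<forall>i\<in>I. u i \<bullet> d = 0) \<and> (\<forall>i\<in>J \<inter> {i. u i \<bullet> x = a $ i}. u i \<bullet> d \<le> 0) \<and>
        (\<forall>i\<in>K \<inter> {i. u i \<bullet> x = a $ i}. 0 \<le> u i \<bullet> d)"
    have "\<exists>e>0. x + e *\<^sub>R d \<in> polyP u a I J K" by (rule polyP_add_small_multiple[OF xP]) (use d in auto)
    then obtain e where e: "0 < e" "x + e *\<^sub>R d \<in> polyP u a I J K" by blast
    have "v \<bullet> (x + e *\<^sub>R d) \<le> v \<bullet> x" by (rule h[OF e(2)])
    then have "e * (v \<bullet> d) \<le> 0" by (simp add: inner_add_right)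
    then show "v \<bullet> d \<le> 0" using e(1) by (simp add: mult_le_0_iff)
  qed
next
  fix v assume v: "v \<in> tight_normal_cone u I J K {i. u i \<bullet> x = a $ i}"
  show "v \<in> {v. \<forall>z\<in>polyP u a I J K. v \<bullet> z \<le> v \<bullet> x}"
  proof (intro CollectI ballI)
    fix z assume zP: "z \<in> polyP u a I J K"
    have "v \<bullet> (z - x) \<le> 0"
      using v unfolding tight_normal_cone_def
    proof (elim CollectE allE impE)
      show "(\<forall>i\<in>I. u i \<bullet> (z - x) = 0) \<and> (\<forall>i\<in>J \<inter> {i. u i \<bullet> x = a $ i}. u i \<bullet> (z - x) \<le> 0) \<and>
        (\<forall>i\<in>K \<inter> {i. u i \<bullet> x = a $ i}. 0 \<le> u i \<bullet> (z - x))"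
        using zP xP by (auto simp: polyP_def inner_diff_right)
    qed
    then show "v \<bullet> z \<le> v \<bullet> x" by (simp add: inner_diff_right)
  qed
qed

lemma normal_fan_polyP:
  assumes part: "I \<union> J \<union> K = UNIV"
  shows "normal_fan (polyP u a I J K) = (\<lambda>\<sigma>. tight_normal_cone u I J K {i. \<sigma> i = 0}) `
    {\<sigma> \<in> range (slack_signs u a). admissible_signs I J K \<sigma>}"
    (is "_ = ?cone ` _")
proof (intro set_eqI iffI)
  fix X assume "X \<in> normal_fan (polyP u a I J K)"
  then obtain x G where X: "X = normal_cone (polyP u a I J K) x"
    and G: "G face_of polyP u a I J K" "x \<in> rel_interior G" unfolding normal_fan_def by blast
  have xP: "x \<in> polyP u a I J K" using G face_of_imp_subset rel_interior_subset by blast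
  then have "X = ?cone (slack_signs u a x)"
    using normal_cone_polyP[OF xP] X by (simp add: slack_signs_eq_0_iff)
  then show "X \<in> ?cone ` {\<sigma> \<in> range (slack_signs u a). admissible_signs I J K \<sigma>}"
    using xP by (auto simp: mem_polyP_iff_admissible)
next
  fix X assume "X \<in> ?cone ` {\<sigma> \<in> range (slack_signs u a). admissible_signs I J K \<sigma>}"
  then obtain x where X: "X = tight_normal_cone u I J K {i. u i \<bullet> x = a $ i}"
    and xP: "x \<in> polyP u a I J K"
    by (auto simp: mem_polyP_iff_admissible slack_signs_eq_0_iff)
  let ?G = "tight_face u a I J K {i. u i \<bullet> x = a $ i}"
  have G: "?G face_of polyP u a I J K" by (rule tight_face_face_of[OF part])
  have "x \<in> ?G" using xP by (simp add: tight_face_def)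
  then obtain x' where x': "x' \<in> rel_interior ?G" "?G = tight_face u a I J K {i. u i \<bullet> x' = a $ i}"
    using face_eq_tight_face[OF part G] by blast
  have "x' \<in> ?G" using x'(1) rel_interior_subset by blast
  then have "{i. u i \<bullet> x' = a $ i} = {i. u i \<bullet> x = a $ i}" and x'P: "x' \<in> polyP u a I J K"
    using \<open>x \<in> ?G\<close> x'(2) by (auto simp: tight_face_def)
  then have "X = normal_cone (polyP u a I J K) x'" using X normal_cone_polyP[OF x'P] by simp
  moreover have "\<exists>G. G face_of polyP u a I J K \<and> G \<noteq> {} \<and> x' \<in> rel_interior G"
    using G x'(1) \<open>x \<in> ?G\<close> by blast
  ultimately show "X \<in> normal_fan (polyP u a I J K)" unfolding normal_fan_def by blast
qed

lemma faces_polyP: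
  assumes part: "I \<union> J \<union> K = UNIV"
  shows "{F. F face_of polyP u a I J K} = insert {} (range (tight_face u a I J K))"
proof (intro set_eqI iffI)
  fix F assume "F \<in> {F. F face_of polyP u a I J K}"
  then have F: "F face_of polyP u a I J K" by simp
  show "F \<in> insert {} (range (tight_face u a I J K))"
  proof (cases "F = {}")
    case False
    then obtain x where "F = tight_face u a I J K {i. u i \<bullet> x = a $ i}"
      using face_eq_tight_face[OF part F] by blast
    then show ?thesis by blast
  qed simp
qed (use tight_face_face_of[OF part] in auto)

lemma polyP_eq_empty_iff:
  "polyP u a I J K = {} \<longleftrightarrow> (\<forall>\<sigma>\<in>range (slack_signs u a). \<not> admissible_signs I J K \<sigma>)"
  by (auto simp: mem_polyP_iff_admissible)

lemma tight_face_eq_empty_iff: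
  "tight_face u a I J K S = {} \<longleftrightarrow>
    (\<forall>\<sigma>\<in>range (slack_signs u a). admissible_signs I J K \<sigma> \<longrightarrow> (\<exists>i\<in>S. \<sigma> i \<noteq> 0))"
  by (auto simp: tight_face_def mem_polyP_iff_admissible slack_signs_eq_0_iff)

lemma tight_face_subset_iff:
  "tight_face u a I J K S \<subseteq> tight_face u a I J K S' \<longleftrightarrow>
    (\<forall>\<sigma>\<in>range (slack_signs u a). admissible_signs I J K \<sigma> \<and> (\<forall>i\<in>S. \<sigma> i = 0) \<longrightarrow> (\<forall>i\<in>S'. \<sigma> i = 0))"
  by (auto simp: tight_face_def mem_polyP_iff_admissible slack_signs_eq_0_iff)

lemma order_iso_indexed_families:
  assumes sub: "\<And>S S'. A S \<subseteq> A S' \<longleftrightarrow> B S \<subseteq> B S'" and emp: "\<And>S. A S = {} \<longleftrightarrow> B S = {}"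
  shows "\<exists>f. bij_betw f (insert {} (range A)) (insert {} (range B)) \<and>
    (\<forall>X1\<in>insert {} (range A). \<forall>X2\<in>insert {} (range A). X1 \<subseteq> X2 \<longleftrightarrow> f X1 \<subseteq> f X2)"
proof -
  define f where "f X = (if X = {} then {} else B (SOME S. X = A S))" for X
  have fA: "f (A S) = B S" for S
  proof (cases "A S = {}")
    case True then show ?thesis using emp by (simp add: f_def)
  next
    case False
    have "A S = A (SOME S'. A S = A S')" by (rule someI[of "\<lambda>S'. A S = A S'" S]) simp
    then have "B (SOME S'. A S = A S') = B S" using sub by (metis subset_antisym order_refl)
    then show ?thesis using False by (simp add: f_def)
  qed
  have f0: "f {} = {}" by (simp add: f_def)
  have ord: "X1 \<subseteq> X2 \<longleftrightarrow> f X1 \<subseteq> f X2" if "X1 \<in> insert {} (range A)" "X2 \<in> insert {} (range A)" for X1 X2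
    using that
  proof (elim insertE rangeE)
    fix S1 S2 assume "X1 = A S1" "X2 = A S2" then show ?thesis using fA sub by simp
  next
    fix S1 assume "X1 = A S1" "X2 = {}" then show ?thesis using fA f0 emp by simp
  next
    fix S2 assume "X1 = {}" "X2 = A S2" then show ?thesis using fA f0 by simp
  next
    assume "X1 = {}" "X2 = {}" then show ?thesis by simp
  qed
  have "bij_betw f (insert {} (range A)) (insert {} (range B))"
    unfolding bij_betw_def
  proof
    show "inj_on f (insert {} (range A))"
      by (rule inj_onI) (metis ord subset_antisym order_refl)
    show "f ` insert {} (range A) = insert {} (range B)"
      using fA f0 by (auto simp: image_iff)
  qed
  then show ?thesis using ord by blast
qed

lemma comb_equivalent_polyP:
  assumes part: "I \<union> J \<union> K = UNIV" and signs: "range (slack_signs u a) = range (slack_signs u b)"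
  shows "comb_equivalent (polyP u a I J K) (polyP u b I J K)"
proof -
  let ?A = "tight_face u a I J K" and ?B = "tight_face u b I J K"
  have "?A S \<subseteq> ?A S' \<longleftrightarrow> ?B S \<subseteq> ?B S'" for S S'
    by (simp only: tight_face_subset_iff signs)
  moreover have "?A S = {} \<longleftrightarrow> ?B S = {}" for S
    by (simp only: tight_face_eq_empty_iff signs)
  ultimately have "\<exists>f. bij_betw f (insert {} (range ?A)) (insert {} (range ?B)) \<and>
    (\<forall>X1\<in>insert {} (range ?A). \<forall>X2\<in>insert {} (range ?A). X1 \<subseteq> X2 \<longleftrightarrow> f X1 \<subseteq> f X2)"
    by (rule order_iso_indexed_families)
  then obtain f where f: "bij_betw f (insert {} (range ?A)) (insert {} (range ?B))"
    "\<forall>X1\<in>insert {} (range ?A). \<forall>X2\<in>insert {} (range ?A). X1 \<subseteq> X2 \<longleftrightarrow> f X1 \<subseteq> f X2"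
    by blast
  show ?thesis
    unfolding comb_equivalent_def faces_polyP[OF part]
  proof (intro exI[of _ f] conjI allI impI)
    fix F1 F2 assume "F1 face_of polyP u a I J K" "F2 face_of polyP u a I J K"
    then have "F1 \<in> insert {} (range ?A)" "F2 \<in> insert {} (range ?A)"
      by (simp_all add: faces_polyP[OF part, symmetric])
    then show "F1 \<subseteq> F2 \<longleftrightarrow> f F1 \<subseteq> f F2" by (rule f(2)[rule_format])
  qed (rule f(1))
qed

theorem theorem1p1:
  fixes u :: "'m::finite \<Rightarrow> real^'n::finite"
    and cv :: "'m set \<Rightarrow> real^'m"
    and F G :: "(real^'m) set"
    and a b :: "real^'m"
  assumes nonzero: "\<forall>i. u i \<noteq> 0"
    and cv: "\<forall>C. is_circuit u C \<longrightarrow> is_circuit_vector u C (cv C)"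
    and F: "F \<in> derived_faces u cv"
    and G: "G \<in> derived_open_faces u cv" "closure G = F"
    and ab: "a \<in> G" "b \<in> G"
  shows "\<forall>I J K. I \<union> J \<union> K = UNIV \<and> I \<inter> J = {} \<and> I \<inter> K = {} \<and> J \<inter> K = {} \<longrightarrow>
           (polyP u a I J K = {} \<longleftrightarrow> polyP u b I J K = {}) \<and>
           (polyP u a I J K \<noteq> {} \<longrightarrow>
              normally_equivalent (polyP u a I J K) (polyP u b I J K) \<and>
              comb_equivalent (polyP u a I J K) (polyP u b I J K))"
proof (intro allI impI)
  fix I J K :: "'m set"
  assume "I \<union> J \<union> K = UNIV \<and> I \<inter> J = {} \<and> I \<inter> K = {} \<and> J \<inter> K = {}"
  then have part: "I \<union> J \<union> K = UNIV" by blast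
  obtain \<epsilon> where "G = {y. \<forall>C. is_circuit u C \<longrightarrow> sgn (cv C \<bullet> y) = \<epsilon> C}"
    using G(1) unfolding derived_open_faces_def by blast
  then have "\<forall>C. is_circuit u C \<longrightarrow> sgn (cv C \<bullet> a) = sgn (cv C \<bullet> b)" using ab by auto
  then have signs: "range (slack_signs u a) = range (slack_signs u b)"
    using slack_signs_range_subset[OF cv] by (metis subset_antisym)
  have "polyP u a I J K = {} \<longleftrightarrow> polyP u b I J K = {}"
    using signs by (simp add: polyP_eq_empty_iff)
  moreover have "normally_equivalent (polyP u a I J K) (polyP u b I J K)"
    using signs by (simp add: normally_equivalent_def normal_fan_polyP[OF part])
  moreover have "comb_equivalent (polyP u a I J K) (polyP u b I J K)"
    using signs by (rule comb_equivalent_polyP[OF part])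
  ultimately show "(polyP u a I J K = {} \<longleftrightarrow> polyP u b I J K = {}) \<and>
        (polyP u a I J K \<noteq> {} \<longrightarrow>
           normally_equivalent (polyP u a I J K) (polyP u b I J K) \<and>
           comb_equivalent (polyP u a I J K) (polyP u b I J K))" by blast
qed

end
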